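(* Let $d\ge1$, let $H$ be a hypergraph of $d$-intervals and let $w$ be a weight system on $H$. Then $\tau_w(H)\le 2d^2\,\nu_w(H)$.
   Context: A $d$-interval is a union of at most $d$ pairwise disjoint closed intervals of the real line $\mathbb{R}$. A hypergraph of $d$-intervals is a finite family $H$ of $d$-intervals, regarded as a hypergraph whose vertices are the points of $\mathbb{R}$ and whose edges are the members of $H$. A matching is a set of pairwise disjoint edges. A weight system on $H$ is a function $w:H\to\mathbb{N}$. $\nu_w(H)$ is the maximum of $\sum_{h\in M}w(h)$ over all matchings $M$. A $w$-cover is a finitely supported function $g:\mathbb{R}\to\mathbb{N}$ with $\sum_{v\in h}g(v)\ge w(h)$ for every $h\in H$; $\tau_w(H)$ is the minimum of $\sum_v g(v)$ over all $w$-covers. *)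

theory Defs
  imports Complex_Main "HOL-Library.Disjoint_Sets"
begin

definition d_interval :: "nat \<Rightarrow> real set \<Rightarrow> bool" where
  "d_interval d S \<longleftrightarrow> (\<exists>k (a::nat \<Rightarrow> real) b. 1 \<le> k \<and> k \<le> d \<and>
      (\<forall>i<k. a i \<le> b i) \<and>
      (\<forall>i<k. \<forall>j<k. i \<noteq> j \<longrightarrow> {a i..b i} \<inter> {a j..b j} = {}) \<and>
      S = (\<Union>i<k. {a i..b i}))"

definition matching :: "real set set \<Rightarrow> real set set \<Rightarrow> bool" where
  "matching H M \<longleftrightarrow> M \<subseteq> H \<and> pairwise disjnt M"

definition nu_w :: "real set set \<Rightarrow> (real set \<Rightarrow> nat) \<Rightarrow> nat" where
  "nu_w H w = Max {sum w M | M. matching H M}"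

definition supp_g :: "(real \<Rightarrow> nat) \<Rightarrow> real set" where
  "supp_g g = {v. g v \<noteq> 0}"

definition w_cover :: "real set set \<Rightarrow> (real set \<Rightarrow> nat) \<Rightarrow> (real \<Rightarrow> nat) \<Rightarrow> bool" where
  "w_cover H w g \<longleftrightarrow> finite (supp_g g) \<and> (\<forall>h\<in>H. sum g (h \<inter> supp_g g) \<ge> w h)"

definition tau_w :: "real set set \<Rightarrow> (real set \<Rightarrow> nat) \<Rightarrow> nat" where
  "tau_w H w = Inf {sum g (supp_g g) | g. w_cover H w g}"

end

theory Submission
  imports Defs
begin

text \<open>Let P be the set of right endpoints of the components of the edges. Two intersecting
  d-intervals always meet in a right endpoint of one of them, so every fractional matching that is
  feasible at the points of P has an edge whose intersecting neighbourhood carries x-mass at most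
  2d; a local ratio induction on the weights then bounds this fractional matching LP by 2d nu_w.
  By LP duality (Farkas' lemma) there is a fractional cover supported on P of cost at most
  2d nu_w. Some component of each edge h receives at least w h / d of this cover; covering these
  chosen intervals optimally (tau_w = nu_w for intervals, again by local ratio) costs at most the
  weight of a family of edges with pairwise disjoint chosen components, and that weight is at most
  d times the fractional cover, i.e. at most 2d^2 nu_w.\<close>

section \<open>Farkas' lemma and LP duality\<close>

definition linear_functional :: "(('v \<Rightarrow> real) \<Rightarrow> real) \<Rightarrow> bool" where
  "linear_functional f \<longleftrightarrow> (\<forall>x y s. f (\<lambda>u. x u - s * y u) = f x - s * f y)"

lemma linear_functionalD:
  "linear_functional f \<Longrightarrow> f (\<lambda>u. x u - s * y u) = f x - s * f y"
  unfolding linear_functional_def by blast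

lemma linear_functional_uminus:
  assumes "linear_functional f"
  shows "f (\<lambda>u. - x u) = - f x"
proof -
  have "f (\<lambda>u. 0) = 0"
    using linear_functionalD[OF assms, of "\<lambda>u. 0" 1 "\<lambda>u. 0"] by simp
  then show ?thesis
    using linear_functionalD[OF assms, of "\<lambda>u. 0" 1 x] by simp
qed

lemma linear_functional_diff:
  assumes "linear_functional f" "linear_functional g"
  shows "linear_functional (\<lambda>x. f x - c * g x)"
  unfolding linear_functional_def linear_functionalD[OF assms(1)] linear_functionalD[OF assms(2)]
  by (simp add: algebra_simps)

text \<open>Fourier-Motzkin elimination: project_along a x0 f is f moved along the direction x0 onto
  the hyperplane a = 0, so with a x0 < 0 the constraint a disappears from the system.\<close>

definition project_along :: "(('v \<Rightarrow> real) \<Rightarrow> real) \<Rightarrow> ('v \<Rightarrow> real) \<Rightarrow>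
    (('v \<Rightarrow> real) \<Rightarrow> real) \<Rightarrow> ('v \<Rightarrow> real) \<Rightarrow> real" where
  "project_along a x0 f x = f x - f x0 / a x0 * a x"

lemma linear_functional_project_along:
  "linear_functional a \<Longrightarrow> linear_functional f \<Longrightarrow> linear_functional (project_along a x0 f)"
  unfolding project_along_def by (rule linear_functional_diff)

lemma project_along_shift:
  "linear_functional f \<Longrightarrow> f (\<lambda>u. x u - a x / a x0 * x0 u) = project_along a x0 f x"
  unfolding project_along_def linear_functionalD by simp

lemma farkas_projection:
  fixes a :: "'i \<Rightarrow> ('v \<Rightarrow> real) \<Rightarrow> real"
  assumes "\<forall>i\<in>insert j I. linear_functional (a i)" "linear_functional b"
    and "\<forall>x. (\<forall>i\<in>insert j I. 0 \<le> a i x) \<longrightarrow> 0 \<le> b x" and "a j x0 < 0"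
  shows "\<forall>x. (\<forall>i\<in>I. 0 \<le> project_along (a j) x0 (a i) x) \<longrightarrow> 0 \<le> project_along (a j) x0 b x"
proof (intro allI impI)
  fix x assume "\<forall>i\<in>I. 0 \<le> project_along (a j) x0 (a i) x"
  moreover have "project_along (a j) x0 (a j) x = 0"
    using assms(4) unfolding project_along_def by simp
  moreover have "a i (\<lambda>u. x u - a j x / a j x0 * x0 u) = project_along (a j) x0 (a i) x"
    if "i \<in> insert j I" for i
    using assms(1) that by (intro project_along_shift) blast
  ultimately have "\<forall>i\<in>insert j I. 0 \<le> a i (\<lambda>u. x u - a j x / a j x0 * x0 u)"
    by auto
  then show "0 \<le> project_along (a j) x0 b x"
    using assms(3) project_along_shift[OF assms(2)] by metis
qed

lemma farkas_lift:
  fixes a :: "'i \<Rightarrow> ('v \<Rightarrow> real) \<Rightarrow> real"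
  assumes "finite I" "j \<notin> I" "a j x0 < 0" "b x0 < 0" "\<forall>i\<in>I. 0 \<le> a i x0" "\<forall>i\<in>I. 0 \<le> m i"
    and m: "\<forall>x. project_along (a j) x0 b x = (\<Sum>i\<in>I. m i * project_along (a j) x0 (a i) x)"
  shows "\<exists>l. (\<forall>i\<in>insert j I. 0 \<le> l i) \<and> (\<forall>x. b x = (\<Sum>i\<in>insert j I. l i * a i x))"
proof -
  define l where "l = m(j := (b x0 - (\<Sum>i\<in>I. m i * a i x0)) / a j x0)"
  have "0 \<le> (\<Sum>i\<in>I. m i * a i x0)"
    using assms(5,6) by (simp add: sum_nonneg)
  then have "0 \<le> l j"
    using assms(3,4) unfolding l_def by (simp add: divide_nonpos_neg)
  have "b x = (\<Sum>i\<in>insert j I. l i * a i x)" for x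
  proof -
    have "b x = (\<Sum>i\<in>I. m i * project_along (a j) x0 (a i) x) + b x0 / a j x0 * a j x"
      using m unfolding project_along_def by (metis diff_add_cancel)
    also have "\<dots> = (\<Sum>i\<in>I. m i * a i x) + l j * a j x"
      using assms(3) unfolding project_along_def l_def
      by (simp add: algebra_simps sum_subtractf sum_distrib_left sum_divide_distrib
          add_divide_distrib diff_divide_distrib)
    also have "\<dots> = (\<Sum>i\<in>insert j I. l i * a i x)"
      using assms(1,2) unfolding l_def by (auto intro: sum.cong)
    finally show ?thesis .
  qed
  moreover have "\<forall>i\<in>insert j I. 0 \<le> l i"
    using assms(6) \<open>0 \<le> l j\<close> unfolding l_def by auto
  ultimately show ?thesis by blast
qed

lemma farkas_linear_functional:
  fixes a :: "'i \<Rightarrow> ('v \<Rightarrow> real) \<Rightarrow> real" and b :: "('v \<Rightarrow> real) \<Rightarrow> real"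
  assumes "finite I"
    and "\<forall>i\<in>I. linear_functional (a i)" and "linear_functional b"
    and "\<forall>x. (\<forall>i\<in>I. 0 \<le> a i x) \<longrightarrow> 0 \<le> b x"
  shows "\<exists>l. (\<forall>i\<in>I. 0 \<le> l i) \<and> (\<forall>x. b x = (\<Sum>i\<in>I. l i * a i x))"
  using assms
proof (induction I arbitrary: a b rule: finite_induct)
  case empty
  have "b x = 0" for x
  proof -
    have "0 \<le> b x" "0 \<le> b (\<lambda>u. - x u)" using empty(3) by simp_all
    then show ?thesis using linear_functional_uminus[OF empty(2), of x] by simp
  qed
  then show ?case by simp
next
  case (insert j I)
  show ?case
  proof (cases "\<forall>x. (\<forall>i\<in>I. 0 \<le> a i x) \<longrightarrow> 0 \<le> b x")
    case True
    then obtain l where "\<forall>i\<in>I. 0 \<le> l i" "\<forall>x. b x = (\<Sum>i\<in>I. l i * a i x)"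
      using insert by blast
    moreover have "(\<Sum>i\<in>insert j I. (l(j := 0)) i * a i x) = (\<Sum>i\<in>I. l i * a i x)" for x
      using insert(1,2) by (auto intro: sum.cong)
    ultimately show ?thesis
      by (intro exI[of _ "l(j := 0)"]) auto
  next
    case False
    then obtain x0 where x0: "\<forall>i\<in>I. 0 \<le> a i x0" "b x0 < 0" by force
    then have "a j x0 < 0"
      using insert(6) by force
    have cone: "\<forall>x. (\<forall>i\<in>I. 0 \<le> project_along (a j) x0 (a i) x) \<longrightarrow> 0 \<le> project_along (a j) x0 b x"
      by (rule farkas_projection[OF insert(4-6) \<open>a j x0 < 0\<close>])
    have "\<forall>i\<in>I. linear_functional (project_along (a j) x0 (a i))"
      "linear_functional (project_along (a j) x0 b)"
      using insert(4,5) by (simp_all add: linear_functional_project_along)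
    from insert(3)[OF this cone] obtain m where m: "\<forall>i\<in>I. 0 \<le> m i"
      "\<forall>x. project_along (a j) x0 b x = (\<Sum>i\<in>I. m i * project_along (a j) x0 (a i) x)"
      by blast
    show ?thesis
      by (rule farkas_lift[of I j a x0 b m, OF insert(1,2) \<open>a j x0 < 0\<close> x0(2,1) m])
  qed
qed

lemma packing_bound_homogeneous:
  fixes A :: "'p \<Rightarrow> 'e \<Rightarrow> real" and c x :: "'e \<Rightarrow> real"
  assumes bound: "\<And>x. \<forall>e\<in>E. 0 \<le> x e \<Longrightarrow> \<forall>p\<in>P. (\<Sum>e\<in>E. A p e * x e) \<le> 1 \<Longrightarrow>
      (\<Sum>e\<in>E. c e * x e) \<le> t"
    and "0 \<le> s" and "\<forall>e\<in>E. 0 \<le> x e" and "\<forall>p\<in>P. (\<Sum>e\<in>E. A p e * x e) \<le> s"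
  shows "(\<Sum>e\<in>E. c e * x e) \<le> t * s"
proof -
  have scaled: "r * (\<Sum>e\<in>E. c e * x e) \<le> t" if "0 < r" "r * s \<le> 1" for r
  proof -
    have "\<forall>p\<in>P. (\<Sum>e\<in>E. A p e * (r * x e)) \<le> 1"
    proof
      fix p assume "p \<in> P"
      then have "r * (\<Sum>e\<in>E. A p e * x e) \<le> r * s"
        using assms(4) \<open>0 < r\<close> by (simp add: mult_left_mono)
      then show "(\<Sum>e\<in>E. A p e * (r * x e)) \<le> 1"
        using that(2) by (simp add: sum_distrib_left mult.left_commute)
    qed
    then have "(\<Sum>e\<in>E. c e * (r * x e)) \<le> t"
      using bound assms(3) \<open>0 < r\<close> by simp
    then show ?thesis by (simp add: sum_distrib_left mult.left_commute)
  qed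
  show ?thesis
  proof (cases "s = 0")
    case True
    have "0 \<le> t"
      using bound[of "\<lambda>_. 0"] by simp
    \<comment> \<open>With s = 0 every positive multiple of x is feasible, so the objective at x cannot be positive.\<close>
    show ?thesis
    proof (rule ccontr)
      assume "\<not> ?thesis"
      then have pos: "0 < (\<Sum>e\<in>E. c e * x e)" using True by simp
      have "(t + 1) / (\<Sum>e\<in>E. c e * x e) * (\<Sum>e\<in>E. c e * x e) \<le> t"
        using pos \<open>0 \<le> t\<close> True by (intro scaled) simp_all
      then show False using pos by simp
    qed
  next
    case False
    then have "1 / s * (\<Sum>e\<in>E. c e * x e) \<le> t"
      using assms(2) by (intro scaled) simp_all
    then show ?thesis
      using False assms(2) by (simp add: field_simps)
  qed
qed

lemma bounded_packing_certificate:
  fixes A :: "'p \<Rightarrow> 'e \<Rightarrow> real" and c :: "'e \<Rightarrow> real"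
  assumes "finite P" "finite E"
    and bound: "\<And>x. \<forall>e\<in>E. 0 \<le> x e \<Longrightarrow> \<forall>p\<in>P. (\<Sum>e\<in>E. A p e * x e) \<le> 1 \<Longrightarrow>
      (\<Sum>e\<in>E. c e * x e) \<le> t"
  obtains g r s where "\<forall>p\<in>P. 0 \<le> g p" "\<forall>e\<in>E. 0 \<le> r e" "0 \<le> s"
    "\<And>y. t * y None - (\<Sum>e\<in>E. c e * y (Some e)) =
      (\<Sum>p\<in>P. g p * (y None - (\<Sum>e\<in>E. A p e * y (Some e)))) + s * y None + (\<Sum>e\<in>E. r e * y (Some e))"
proof -
  \<comment> \<open>Farkas' lemma for the homogenized packing system; the variable None scales the right-hand side.\<close>
  define I where "I = P <+> insert None (Some ` E)"
  define a :: "'p + 'e option \<Rightarrow> ('e option \<Rightarrow> real) \<Rightarrow> real" where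
    "a = case_sum (\<lambda>p y. y None - (\<Sum>e\<in>E. A p e * y (Some e))) (\<lambda>u y. y u)"
  define b :: "('e option \<Rightarrow> real) \<Rightarrow> real" where
    "b y = t * y None - (\<Sum>e\<in>E. c e * y (Some e))" for y
  have "\<forall>i\<in>I. linear_functional (a i)"
    unfolding linear_functional_def a_def
    by (auto split: sum.split simp: algebra_simps sum_subtractf sum_distrib_left)
  moreover have "linear_functional b"
    unfolding linear_functional_def b_def by (simp add: algebra_simps sum_subtractf sum_distrib_left)
  moreover have "\<forall>y. (\<forall>i\<in>I. 0 \<le> a i y) \<longrightarrow> 0 \<le> b y"
  proof (intro allI impI)
    fix y assume y: "\<forall>i\<in>I. 0 \<le> a i y"
    have "Inr None \<in> I" "\<And>e. e \<in> E \<Longrightarrow> Inr (Some e) \<in> I" "\<And>p. p \<in> P \<Longrightarrow> Inl p \<in> I"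
      unfolding I_def by blast+
    then have "0 \<le> y None" "\<forall>e\<in>E. 0 \<le> y (Some e)"
      "\<forall>p\<in>P. (\<Sum>e\<in>E. A p e * y (Some e)) \<le> y None"
      using y unfolding a_def by fastforce+
    then show "0 \<le> b y"
      using packing_bound_homogeneous[OF bound] unfolding b_def by simp
  qed
  moreover have "finite I"
    using \<open>finite P\<close> \<open>finite E\<close> unfolding I_def by simp
  ultimately obtain l where l_nonneg: "\<forall>i\<in>I. 0 \<le> l i"
    and l_comb: "\<And>y. b y = (\<Sum>i\<in>I. l i * a i y)"
    using farkas_linear_functional[of I a b] by blast
  show ?thesis
  proof (rule that[of "l \<circ> Inl" "l \<circ> Inr \<circ> Some" "l (Inr None)"])
    show "\<forall>p\<in>P. 0 \<le> (l \<circ> Inl) p" "\<forall>e\<in>E. 0 \<le> (l \<circ> Inr \<circ> Some) e" "0 \<le> l (Inr None)"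
      using l_nonneg unfolding I_def by auto
    show "t * y None - (\<Sum>e\<in>E. c e * y (Some e)) = (\<Sum>p\<in>P. (l \<circ> Inl) p * (y None - (\<Sum>e\<in>E. A p e * y (Some e))))
        + l (Inr None) * y None + (\<Sum>e\<in>E. (l \<circ> Inr \<circ> Some) e * y (Some e))" for y
      using l_comb[of y] \<open>finite P\<close> \<open>finite E\<close> unfolding I_def b_def
      by (simp add: sum.Plus sum.reindex a_def)
  qed
qed

lemma fractional_cover_of_bounded_packing:
  fixes A :: "'p \<Rightarrow> 'e \<Rightarrow> real" and c :: "'e \<Rightarrow> real"
  assumes "finite P" "finite E"
    and bound: "\<And>x. \<forall>e\<in>E. 0 \<le> x e \<Longrightarrow> \<forall>p\<in>P. (\<Sum>e\<in>E. A p e * x e) \<le> 1 \<Longrightarrow>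
      (\<Sum>e\<in>E. c e * x e) \<le> t"
  shows "\<exists>g. (\<forall>p\<in>P. 0 \<le> g p) \<and> (\<forall>e\<in>E. c e \<le> (\<Sum>p\<in>P. g p * A p e)) \<and> (\<Sum>p\<in>P. g p) \<le> t"
proof -
  obtain g r s where g_nonneg: "\<forall>p\<in>P. 0 \<le> g p" and "\<forall>e\<in>E. 0 \<le> r e" "0 \<le> s"
    and comb: "\<And>y. t * y None - (\<Sum>e\<in>E. c e * y (Some e)) =
      (\<Sum>p\<in>P. g p * (y None - (\<Sum>e\<in>E. A p e * y (Some e)))) + s * y None + (\<Sum>e\<in>E. r e * y (Some e))"
    using bounded_packing_certificate[OF assms] by blast
  have "c e \<le> (\<Sum>p\<in>P. g p * A p e)" if "e \<in> E" for e
  proof -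
    have "- c e = - (\<Sum>p\<in>P. g p * A p e) + r e"
      using comb[of "\<lambda>u. if u = Some e then 1 else 0"] \<open>finite E\<close> that
      by (simp add: if_distrib sum.delta sum_negf cong: if_cong)
    moreover have "0 \<le> r e"
      using \<open>\<forall>e\<in>E. 0 \<le> r e\<close> that by blast
    ultimately show ?thesis
      by linarith
  qed
  moreover have "t = (\<Sum>p\<in>P. g p) + s"
    using comb[of "\<lambda>u. if u = None then 1 else 0"] by simp
  ultimately show ?thesis
    using g_nonneg \<open>0 \<le> s\<close> by auto
qed

section \<open>Matchings, covers and the local ratio method\<close>

lemma finite_matching_weights:
  assumes "finite H"
  shows "finite {sum w M | M. matching H M}"
proof -
  have "{sum w M | M. matching H M} \<subseteq> sum w ` Pow H"
    unfolding matching_def by auto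
  then show ?thesis
    using assms finite_subset by blast
qed

lemma nu_w_ge:
  assumes "finite H" "matching H M"
  shows "sum w M \<le> nu_w H w"
  unfolding nu_w_def using finite_matching_weights[OF assms(1)] assms(2) by (intro Max_ge) auto

lemma nu_w_attained:
  assumes "finite H"
  obtains M where "matching H M" "sum w M = nu_w H w"
proof -
  have "matching H {}"
    unfolding matching_def by simp
  then have "nu_w H w \<in> {sum w M | M. matching H M}"
    unfolding nu_w_def using finite_matching_weights[OF assms] by (intro Max_in) auto
  then obtain M where "nu_w H w = sum w M" "matching H M"
    by blast
  then show ?thesis
    using that by simp
qed

lemma matching_iff_disjoint_family: "matching H M \<longleftrightarrow> M \<subseteq> H \<and> disjoint_family_on id M"
  unfolding matching_def disjoint_family_on_def pairwise_def disjnt_def by auto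

lemma tau_w_le:
  assumes "finite Q" "supp_g G \<subseteq> Q" "\<forall>h\<in>H. w h \<le> sum G (h \<inter> Q)"
  shows "tau_w H w \<le> sum G Q"
proof -
  have sum_supp: "sum G (A \<inter> supp_g G) = sum G (A \<inter> Q)" for A
    using assms(1,2) by (intro sum.mono_neutral_left) (auto simp: supp_g_def)
  have "w_cover H w G"
    unfolding w_cover_def sum_supp using assms finite_subset by blast
  then have "tau_w H w \<le> sum G (UNIV \<inter> supp_g G)"
    unfolding tau_w_def by (intro cInf_lower) auto
  then show ?thesis
    unfolding sum_supp by simp
qed

lemma sum_le_of_disjoint_family:
  fixes f :: "'e \<Rightarrow> real" and g :: "'a \<Rightarrow> real"
  assumes "finite F" "finite P" "disjoint_family_on J F" "\<forall>v\<in>P. 0 \<le> g v" "0 \<le> c"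
    and "\<forall>h\<in>F. f h \<le> c * (\<Sum>v\<in>P \<inter> J h. g v)"
  shows "(\<Sum>h\<in>F. f h) \<le> c * (\<Sum>v\<in>P. g v)"
proof -
  have "(\<Sum>h\<in>F. \<Sum>v\<in>P \<inter> J h. g v) = (\<Sum>v\<in>(\<Union>h\<in>F. P \<inter> J h). g v)"
    using assms(1-3) unfolding disjoint_family_on_def by (intro sum.UNION_disjoint[symmetric]) auto
  also have "\<dots> \<le> (\<Sum>v\<in>P. g v)"
    using assms(2,4) by (intro sum_mono2) auto
  finally have mass: "(\<Sum>h\<in>F. \<Sum>v\<in>P \<inter> J h. g v) \<le> (\<Sum>v\<in>P. g v)" .
  have "(\<Sum>h\<in>F. f h) \<le> (\<Sum>h\<in>F. c * (\<Sum>v\<in>P \<inter> J h. g v))"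
    using assms(6) by (intro sum_mono) blast
  also have "\<dots> = c * (\<Sum>h\<in>F. \<Sum>v\<in>P \<inter> J h. g v)"
    by (rule sum_distrib_left[symmetric])
  also have "\<dots> \<le> c * (\<Sum>v\<in>P. g v)"
    using mass assms(5) by (rule mult_left_mono)
  finally show ?thesis .
qed

text \<open>The local ratio step at h0 subtracts w h0 from every edge meeting h0, so that
  w \<le> w' + w h0 on the edges meeting h0; the truncated subtraction gives w' h0 = 0.\<close>

definition local_ratio_weight :: "('e \<Rightarrow> 'a set) \<Rightarrow> ('e \<Rightarrow> nat) \<Rightarrow> 'e \<Rightarrow> 'e \<Rightarrow> nat" where
  "local_ratio_weight J w h0 e = (if J e \<inter> J h0 \<noteq> {} then w e - w h0 else w e)"

lemma local_ratio_weight_le: "local_ratio_weight J w h0 e \<le> w e"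
  unfolding local_ratio_weight_def by simp

lemma local_ratio_support_less:
  assumes "finite H" "h0 \<in> H" "0 < w h0" "J h0 \<noteq> {}"
  shows "card {e\<in>H. 0 < local_ratio_weight J w h0 e} < card {e\<in>H. 0 < w e}"
proof (rule psubset_card_mono)
  show "finite {e\<in>H. 0 < w e}"
    using assms(1) by simp
  have "local_ratio_weight J w h0 h0 = 0"
    using assms(4) unfolding local_ratio_weight_def by simp
  moreover have "{e\<in>H. 0 < local_ratio_weight J w h0 e} \<subseteq> {e\<in>H. 0 < w e}"
    using local_ratio_weight_le[of J w h0] by (auto intro: less_le_trans)
  ultimately show "{e\<in>H. 0 < local_ratio_weight J w h0 e} \<subset> {e\<in>H. 0 < w e}"
    using assms(2,3) by (metis (no_types, lifting) less_irrefl mem_Collect_eq psubsetI)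
qed

text \<open>Either the packing already uses an edge meeting h0, whose weight was reduced by w h0,
  or h0 can be added to it.\<close>

lemma local_ratio_packing:
  fixes J :: "'e \<Rightarrow> 'a set" and w :: "'e \<Rightarrow> nat"
  assumes "finite F'" "disjoint_family_on J F'" "0 < w h0" "J h0 \<noteq> {}"
  obtains F where "F \<subseteq> insert h0 F'" "disjoint_family_on J F"
    "sum (local_ratio_weight J w h0) F' + w h0 \<le> sum w F"
proof -
  let ?w' = "local_ratio_weight J w h0"
  define F'' where "F'' = {e\<in>F'. 0 < ?w' e}"
  have "finite F''" "F'' \<subseteq> F'"
    using assms(1) unfolding F''_def by auto
  have positive_part: "sum ?w' F' = sum ?w' F''"
    unfolding F''_def using assms(1) by (intro sum.mono_neutral_right) auto
  show ?thesis
  proof (cases "\<exists>e\<in>F''. J e \<inter> J h0 \<noteq> {}")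
    case True
    then obtain e where e: "e \<in> F''" "J e \<inter> J h0 \<noteq> {}" by blast
    then have "w e = ?w' e + w h0"
      unfolding F''_def local_ratio_weight_def by auto
    moreover have "sum ?w' (F'' - {e}) \<le> sum w (F'' - {e})"
      by (intro sum_mono local_ratio_weight_le)
    ultimately have "sum ?w' F'' + w h0 \<le> sum w F''"
      using e(1) \<open>finite F''\<close> by (simp add: sum.remove)
    moreover have "disjoint_family_on J F''"
      using assms(2) \<open>F'' \<subseteq> F'\<close> by (rule disjoint_family_on_mono[rotated])
    ultimately show ?thesis
      using that[of F''] \<open>F'' \<subseteq> F'\<close> positive_part by auto
  next
    case False
    have "h0 \<notin> F''"
      using False assms(4) by auto
    have "disjoint_family_on J F''"
      using assms(2) \<open>F'' \<subseteq> F'\<close> by (rule disjoint_family_on_mono[rotated])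
    then have "disjoint_family_on J (insert h0 F'')"
      using False unfolding disjoint_family_on_def by (auto simp: Int_commute)
    moreover have "sum ?w' F'' \<le> sum w F''"
      by (intro sum_mono local_ratio_weight_le)
    then have "sum ?w' F' + w h0 \<le> sum w (insert h0 F'')"
      using positive_part \<open>h0 \<notin> F''\<close> \<open>finite F''\<close> by simp
    ultimately show ?thesis
      using that[of "insert h0 F''"] \<open>F'' \<subseteq> F'\<close> by auto
  qed
qed

lemma nu_w_local_ratio:
  assumes "finite H" "h0 \<in> H" "0 < w h0" "h0 \<noteq> {}"
  shows "nu_w H (local_ratio_weight id w h0) + w h0 \<le> nu_w H w"
proof -
  obtain M where M: "matching H M" "sum (local_ratio_weight id w h0) M = nu_w H (local_ratio_weight id w h0)"
    using nu_w_attained[OF assms(1)] by blast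
  then have "M \<subseteq> H" "disjoint_family_on id M"
    unfolding matching_iff_disjoint_family by auto
  moreover have "finite M"
    using \<open>M \<subseteq> H\<close> assms(1) finite_subset by blast
  ultimately obtain F where "F \<subseteq> insert h0 M" "disjoint_family_on id F"
    "sum (local_ratio_weight id w h0) M + w h0 \<le> sum w F"
    using local_ratio_packing[of M id w h0] assms(3,4) by auto
  moreover have "matching H F"
    using \<open>F \<subseteq> insert h0 M\<close> \<open>M \<subseteq> H\<close> assms(2) \<open>disjoint_family_on id F\<close>
    unfolding matching_iff_disjoint_family by blast
  ultimately show ?thesis
    using M(2) nu_w_ge[OF assms(1), of F w] by linarith
qed

lemma local_ratio_weighted_sum:
  fixes x :: "'e \<Rightarrow> real"
  assumes "finite H" "\<forall>h\<in>H. 0 \<le> x h"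
  shows "(\<Sum>h\<in>H. w h * x h) \<le> (\<Sum>h\<in>H. local_ratio_weight J w h0 h * x h)
    + w h0 * (\<Sum>e\<in>{e\<in>H. 0 < w e \<and> J h0 \<inter> J e \<noteq> {}}. x e)"
proof -
  let ?N = "\<lambda>h. 0 < w h \<and> J h0 \<inter> J h \<noteq> {}"
  have "w h * x h \<le> local_ratio_weight J w h0 h * x h + (if ?N h then real (w h0) else 0) * x h"
    if "h \<in> H" for h
  proof -
    have "real (w h) \<le> local_ratio_weight J w h0 h + (if ?N h then real (w h0) else 0)"
      unfolding local_ratio_weight_def by (auto simp: Int_commute)
    from mult_right_mono[OF this, of "x h"] show ?thesis
      using assms(2) that by (simp add: distrib_right)
  qed
  then have "(\<Sum>h\<in>H. w h * x h)
      \<le> (\<Sum>h\<in>H. local_ratio_weight J w h0 h * x h + (if ?N h then real (w h0) else 0) * x h)"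
    by (rule sum_mono)
  also have "\<dots> = (\<Sum>h\<in>H. local_ratio_weight J w h0 h * x h) + w h0 * (\<Sum>e\<in>{e\<in>H. ?N e}. x e)"
  proof -
    have "(if ?N h then real (w h0) else 0) * x h = w h0 * (if ?N h then x h else 0)" for h
      by simp
    then show ?thesis
      using assms(1) by (simp add: sum.distrib sum.inter_filter sum_distrib_left)
  qed
  finally show ?thesis .
qed

section \<open>Intervals\<close>

lemma sum_add_point_mass:
  assumes "finite Q" "supp_g G \<subseteq> Q"
  shows "sum (G(p := G p + \<delta>)) (A \<inter> insert p Q) = sum G (A \<inter> Q) + (if p \<in> A then \<delta> else 0)"
proof (cases "p \<in> A")
  case True
  have "sum G (insert p (A \<inter> Q)) = sum G (A \<inter> Q)"
    using assms True by (cases "p \<in> Q") (auto simp: supp_g_def insert_absorb)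
  moreover have "sum (G(p := G p + \<delta>)) (insert p (A \<inter> Q)) = \<delta> + sum G (insert p (A \<inter> Q))"
    using assms(1) by (simp add: sum.insert_remove)
  ultimately show ?thesis
    using True by (simp add: Int_insert_right)
next
  case False
  then show ?thesis
    by (auto simp: Int_insert_right intro: sum.cong)
qed

lemma supp_g_add_point_mass: "supp_g G \<subseteq> Q \<Longrightarrow> supp_g (G(p := G p + \<delta>)) \<subseteq> insert p Q"
  unfolding supp_g_def by auto

lemma local_ratio_point_cover:
  assumes "finite Q" "supp_g G \<subseteq> Q" "local_ratio_weight J w h0 h \<le> sum G (J h \<inter> Q)"
    and "0 < w h \<Longrightarrow> J h \<inter> J h0 \<noteq> {} \<Longrightarrow> p \<in> J h"
  shows "w h \<le> sum (G(p := G p + w h0)) (J h \<inter> insert p Q)"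
proof (cases "0 < w h \<and> J h \<inter> J h0 \<noteq> {}")
  case True
  then have "w h \<le> local_ratio_weight J w h0 h + w h0"
    unfolding local_ratio_weight_def by simp
  then show ?thesis
    using True assms sum_add_point_mass[OF assms(1,2), of p "w h0" "J h"] by simp
next
  case False
  then have "w h \<le> local_ratio_weight J w h0 h"
    unfolding local_ratio_weight_def by auto
  then show ?thesis
    using assms sum_add_point_mass[OF assms(1,2), of p "w h0" "J h"] by simp
qed

text \<open>Weighted Gallai theorem for intervals (tau_w = nu_w), by local ratio at the
  positive-weight interval with the leftmost right endpoint p: every positive-weight interval
  meeting it contains p.\<close>

lemma interval_cover_le_packing:
  fixes lo hi :: "'e \<Rightarrow> real" and w :: "'e \<Rightarrow> nat"
  assumes "finite H" "\<forall>h\<in>H. lo h \<le> hi h"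
  shows "\<exists>G Q F. finite Q \<and> supp_g G \<subseteq> Q \<and> (\<forall>h\<in>H. w h \<le> sum G ({lo h..hi h} \<inter> Q)) \<and>
    F \<subseteq> H \<and> disjoint_family_on (\<lambda>h. {lo h..hi h}) F \<and> sum G Q \<le> sum w F"
proof (induction "card {h\<in>H. 0 < w h}" arbitrary: w rule: less_induct)
  case less
  define J where "J h = {lo h..hi h}" for h
  define S where "S = {h\<in>H. 0 < w h}"
  show ?case
  proof (cases "S = {}")
    case True
    then have "\<forall>h\<in>H. w h = 0"
      unfolding S_def by auto
    then show ?thesis
      by (intro exI[of _ "\<lambda>_. 0"] exI[of _ "{}"]) (auto simp: supp_g_def disjoint_family_on_def)
  next
    case False
    have "finite S"
      using assms(1) unfolding S_def by simp
    have "Min (hi ` S) \<in> hi ` S"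
      using False \<open>finite S\<close> by simp
    then obtain h0 where h0: "h0 \<in> S" "hi h0 = Min (hi ` S)"
      by auto
    define p where "p = hi h0"
    define w' where "w' = local_ratio_weight J w h0"
    have "h0 \<in> H" "0 < w h0" "J h0 \<noteq> {}"
      using h0(1) assms(2) unfolding S_def J_def by auto
    have p_mem: "p \<in> J h" if "h \<in> S" "J h \<inter> J h0 \<noteq> {}" for h
      using that h0 \<open>finite S\<close> unfolding J_def p_def by auto
    have support_less: "card {h\<in>H. 0 < w' h} < card {h\<in>H. 0 < w h}"
      unfolding w'_def by (rule local_ratio_support_less) fact+
    obtain G' Q' F' where IH: "finite Q'" "supp_g G' \<subseteq> Q'" "\<forall>h\<in>H. w' h \<le> sum G' (J h \<inter> Q')"
      "F' \<subseteq> H" "disjoint_family_on J F'" "sum G' Q' \<le> sum w' F'"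
      using less(1)[OF support_less] unfolding J_def by blast
    define G where "G = G'(p := G' p + w h0)"
    define Q where "Q = insert p Q'"
    have "w h \<le> sum G (J h \<inter> Q)" if "h \<in> H" for h
      unfolding G_def Q_def using IH(1,2) IH(3) that p_mem
      by (intro local_ratio_point_cover) (auto simp: w'_def S_def)
    moreover obtain F where F: "F \<subseteq> insert h0 F'" "disjoint_family_on J F" "sum w' F' + w h0 \<le> sum w F"
      using local_ratio_packing[of F' J w h0] IH(4,5) assms(1) \<open>0 < w h0\<close> \<open>J h0 \<noteq> {}\<close>
      unfolding w'_def by (metis finite_subset)
    moreover have "sum G Q \<le> sum w F"
      using sum_add_point_mass[OF IH(1,2), of p "w h0" UNIV] IH(6) F(3) unfolding G_def Q_def by simp
    moreover have "finite Q" "supp_g G \<subseteq> Q" "F \<subseteq> H"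
      using IH(1,2,4) F(1) \<open>h0 \<in> H\<close> supp_g_add_point_mass unfolding G_def Q_def by auto
    ultimately show ?thesis
      unfolding J_def by blast
  qed
qed

section \<open>Families of d-intervals\<close>

locale d_interval_family =
  fixes d :: nat and H :: "real set set"
    and K :: "real set \<Rightarrow> nat" and lo hi :: "real set \<Rightarrow> nat \<Rightarrow> real"
  assumes finite_H: "finite H"
    and K_pos: "h \<in> H \<Longrightarrow> 1 \<le> K h"
    and K_le: "h \<in> H \<Longrightarrow> K h \<le> d"
    and lo_le_hi: "h \<in> H \<Longrightarrow> i < K h \<Longrightarrow> lo h i \<le> hi h i"
    and components_disjoint: "h \<in> H \<Longrightarrow> i < K h \<Longrightarrow> j < K h \<Longrightarrow> i \<noteq> j \<Longrightarrow>
      {lo h i..hi h i} \<inter> {lo h j..hi h j} = {}"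
    and edge_eq_components: "h \<in> H \<Longrightarrow> h = (\<Union>i<K h. {lo h i..hi h i})"

lemma d_interval_family_exists:
  assumes "finite H" "\<forall>h\<in>H. d_interval d h"
  obtains K lo hi where "d_interval_family d H K lo hi"
proof -
  define D where "D h k a b \<longleftrightarrow> 1 \<le> k \<and> k \<le> d \<and> (\<forall>i<k. a i \<le> b i) \<and>
      (\<forall>i<k. \<forall>j<k. i \<noteq> j \<longrightarrow> {a i..b i} \<inter> {a j..b j} = {}) \<and> h = (\<Union>i<k. {a i..b i})"
    for h :: "real set" and k and a b :: "nat \<Rightarrow> real"
  have "\<forall>h\<in>H. \<exists>k a b. D h k a b"
    using assms(2) unfolding d_interval_def D_def .
  then obtain K where "\<forall>h\<in>H. \<exists>a b. D h (K h) a b"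
    by (rule bchoice[THEN exE])
  then obtain lo where "\<forall>h\<in>H. \<exists>b. D h (K h) (lo h) b"
    by (rule bchoice[THEN exE])
  then obtain hi where "\<forall>h\<in>H. D h (K h) (lo h) (hi h)"
    by (rule bchoice[THEN exE])
  then show ?thesis
    by (intro that[of K lo hi], unfold_locales) (use assms(1) in \<open>auto simp: D_def\<close>)
qed

context d_interval_family
begin

definition right_ends :: "real set \<Rightarrow> real set" where
  "right_ends h = hi h ` {..<K h}"

definition endpoints :: "real set" where
  "endpoints = (\<Union>h\<in>H. right_ends h)"

text \<open>Fractional matchings are only constrained at the right endpoints; the LP dual of this
  relaxation is a fractional cover supported on them.\<close>

definition endpoint_packing :: "(real set \<Rightarrow> real) \<Rightarrow> bool" where
  "endpoint_packing x \<longleftrightarrow> (\<forall>h\<in>H. 0 \<le> x h) \<and> (\<forall>v\<in>endpoints. (\<Sum>e\<in>{e\<in>H. v \<in> e}. x e) \<le> 1)"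

lemma mem_edge_iff: "h \<in> H \<Longrightarrow> v \<in> h \<longleftrightarrow> (\<exists>i<K h. v \<in> {lo h i..hi h i})"
  using edge_eq_components[of h] by (metis (no_types, lifting) UN_iff lessThan_iff)

lemma finite_right_ends: "finite (right_ends h)"
  unfolding right_ends_def by simp

lemma right_ends_subset: "h \<in> H \<Longrightarrow> right_ends h \<subseteq> h"
  unfolding right_ends_def using mem_edge_iff lo_le_hi by fastforce

lemma card_right_ends_le: "h \<in> H \<Longrightarrow> card (right_ends h) \<le> d"
  unfolding right_ends_def using card_image_le[of "{..<K h}" "hi h"] K_le[of h] by simp

lemma right_ends_nonempty: "h \<in> H \<Longrightarrow> right_ends h \<noteq> {}"
  unfolding right_ends_def using K_pos[of h] by (simp add: lessThan_empty_iff)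

lemma finite_endpoints: "finite endpoints"
  unfolding endpoints_def using finite_H finite_right_ends by blast

lemma intersecting_edges_share_right_end:
  assumes "h \<in> H" "e \<in> H" "h \<inter> e \<noteq> {}"
  shows "right_ends h \<inter> e \<noteq> {} \<or> right_ends e \<inter> h \<noteq> {}"
proof -
  obtain v i j where i: "i < K h" "v \<in> {lo h i..hi h i}" and j: "j < K e" "v \<in> {lo e j..hi e j}"
    using assms mem_edge_iff by blast
  have "hi h i \<in> right_ends h" "hi e j \<in> right_ends e"
    using i(1) j(1) unfolding right_ends_def by auto
  moreover have "hi h i \<in> e \<or> hi e j \<in> h"
  proof (cases "hi h i \<le> hi e j")
    case True
    then have "hi h i \<in> {lo e j..hi e j}"
      using i(2) j(2) by auto
    then show ?thesis
      using assms(2) j(1) mem_edge_iff by blast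
  next
    case False
    then have "hi e j \<in> {lo h i..hi h i}"
      using i(2) j(2) by auto
    then show ?thesis
      using assms(1) i(1) mem_edge_iff by blast
  qed
  ultimately show ?thesis by blast
qed

lemma endpoint_load_le:
  fixes x :: "real set \<Rightarrow> real"
  assumes "endpoint_packing x" "S \<subseteq> H" "h \<in> H"
  shows "(\<Sum>e\<in>S. x e * card (right_ends h \<inter> e)) \<le> d"
proof -
  have "finite S"
    using assms(2) finite_H finite_subset by blast
  have "(\<Sum>e\<in>S. x e * card (right_ends h \<inter> e)) = (\<Sum>e\<in>S. \<Sum>r\<in>right_ends h. if r \<in> e then x e else 0)"
    using finite_right_ends by (simp add: sum.inter_restrict[symmetric] mult.commute)
  also have "\<dots> = (\<Sum>r\<in>right_ends h. \<Sum>e\<in>{e\<in>S. r \<in> e}. x e)"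
    using \<open>finite S\<close> by (subst sum.swap) (simp add: sum.inter_filter)
  also have "\<dots> \<le> (\<Sum>r\<in>right_ends h. 1)"
  proof (intro sum_mono)
    fix r assume "r \<in> right_ends h"
    then have "r \<in> endpoints"
      using assms(3) unfolding endpoints_def by blast
    have "(\<Sum>e\<in>{e\<in>S. r \<in> e}. x e) \<le> (\<Sum>e\<in>{e\<in>H. r \<in> e}. x e)"
      using assms(1,2) finite_H unfolding endpoint_packing_def by (intro sum_mono2) auto
    also have "\<dots> \<le> 1"
      using assms(1) \<open>r \<in> endpoints\<close> unfolding endpoint_packing_def by blast
    finally show "(\<Sum>e\<in>{e\<in>S. r \<in> e}. x e) \<le> 1" .
  qed
  also have "\<dots> \<le> d"
    using card_right_ends_le[OF assms(3)] by simp
  finally show ?thesis .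
qed

text \<open>Charging each intersecting pair to a right endpoint of one edge lying in the other.\<close>

lemma intersection_weight_le:
  fixes x :: "real set \<Rightarrow> real"
  assumes "endpoint_packing x" "S \<subseteq> H"
  shows "(\<Sum>h\<in>S. x h * (\<Sum>e\<in>{e\<in>S. h \<inter> e \<noteq> {}}. x e)) \<le> 2 * d * (\<Sum>h\<in>S. x h)"
proof -
  define c where "c h e = real (card (right_ends h \<inter> e))" for h e
  have "finite S"
    using assms(2) finite_H finite_subset by blast
  have x_nonneg: "0 \<le> x h" if "h \<in> S" for h
    using assms that unfolding endpoint_packing_def by auto
  have "(\<Sum>h\<in>S. x h * (\<Sum>e\<in>{e\<in>S. h \<inter> e \<noteq> {}}. x e))
      = (\<Sum>h\<in>S. \<Sum>e\<in>S. x h * x e * (if h \<inter> e \<noteq> {} then 1 else 0))"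
    using \<open>finite S\<close> by (simp add: sum.inter_filter sum_distrib_left if_distrib cong: if_cong)
  also have "\<dots> \<le> (\<Sum>h\<in>S. \<Sum>e\<in>S. x h * x e * c h e + x e * x h * c e h)"
  proof (intro sum_mono)
    fix h e assume "h \<in> S" "e \<in> S"
    have "(if h \<inter> e \<noteq> {} then 1 else 0) \<le> c h e + c e h"
    proof (cases "h \<inter> e = {}")
      case False
      then have "right_ends h \<inter> e \<noteq> {} \<or> right_ends e \<inter> h \<noteq> {}"
        using intersecting_edges_share_right_end \<open>h \<in> S\<close> \<open>e \<in> S\<close> assms(2) by blast
      then have "0 < card (right_ends h \<inter> e) + card (right_ends e \<inter> h)"
        using finite_right_ends[of h] finite_right_ends[of e] by (auto simp: card_gt_0_iff)
      then show ?thesis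
        using False unfolding c_def by (simp flip: of_nat_add add: Suc_leI)
    qed (simp add: c_def)
    then have "x h * x e * (if h \<inter> e \<noteq> {} then 1 else 0) \<le> x h * x e * (c h e + c e h)"
      using x_nonneg \<open>h \<in> S\<close> \<open>e \<in> S\<close> by (intro mult_left_mono) auto
    then show "x h * x e * (if h \<inter> e \<noteq> {} then 1 else 0) \<le> x h * x e * c h e + x e * x h * c e h"
      by (simp add: algebra_simps)
  qed
  also have "\<dots> = (\<Sum>h\<in>S. \<Sum>e\<in>S. x h * x e * c h e) + (\<Sum>h\<in>S. \<Sum>e\<in>S. x e * x h * c e h)"
    by (simp add: sum.distrib)
  also have "(\<Sum>h\<in>S. \<Sum>e\<in>S. x e * x h * c e h) = (\<Sum>h\<in>S. \<Sum>e\<in>S. x h * x e * c h e)"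
    by (rule sum.swap)
  also have "(\<Sum>h\<in>S. \<Sum>e\<in>S. x h * x e * c h e) + \<dots> = 2 * (\<Sum>h\<in>S. x h * (\<Sum>e\<in>S. x e * c h e))"
    by (simp add: sum_distrib_left mult.assoc)
  also have "\<dots> \<le> 2 * (\<Sum>h\<in>S. x h * d)"
    using endpoint_load_le[OF assms] x_nonneg assms(2) unfolding c_def
    by (intro mult_left_mono sum_mono) auto
  also have "\<dots> = 2 * d * (\<Sum>h\<in>S. x h)"
    by (simp add: sum_distrib_left sum_distrib_right mult_ac)
  finally show ?thesis .
qed

lemma exists_light_edge:
  fixes x :: "real set \<Rightarrow> real"
  assumes "endpoint_packing x" "S \<subseteq> H" "0 < (\<Sum>h\<in>S. x h)"
  obtains h where "h \<in> S" "0 < x h" "(\<Sum>e\<in>{e\<in>S. h \<inter> e \<noteq> {}}. x e) \<le> 2 * d"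
proof (rule ccontr)
  note light = that
  define N where "N h = (\<Sum>e\<in>{e\<in>S. h \<inter> e \<noteq> {}}. x e)" for h
  assume "\<not> thesis"
  then have heavy: "2 * d < N h" if "h \<in> S" "0 < x h" for h
    using light[of h] that unfolding N_def by force
  have "finite S"
    using assms(2) finite_H finite_subset by blast
  have x_nonneg: "0 \<le> x h" if "h \<in> S" for h
    using assms that unfolding endpoint_packing_def by auto
  obtain h1 where "h1 \<in> S" "0 < x h1"
    using assms(3) sum_nonpos[of S x] by force
  have "(\<Sum>h\<in>S. x h * (2 * d)) < (\<Sum>h\<in>S. x h * N h)"
  proof (rule sum_strict_mono_ex1[OF \<open>finite S\<close>])
    show "\<forall>h\<in>S. x h * (2 * d) \<le> x h * N h"
    proof
      fix h assume "h \<in> S"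
      then show "x h * (2 * d) \<le> x h * N h"
        using heavy[of h] x_nonneg[of h] by (cases "x h = 0") (auto intro: mult_left_mono)
    qed
    show "\<exists>h\<in>S. x h * (2 * d) < x h * N h"
      using heavy \<open>h1 \<in> S\<close> \<open>0 < x h1\<close> by (intro bexI[of _ h1]) simp_all
  qed
  moreover have "(\<Sum>h\<in>S. x h * N h) \<le> 2 * d * (\<Sum>h\<in>S. x h)"
    unfolding N_def using intersection_weight_le[OF assms(1,2)] .
  ultimately show False
    by (simp add: sum_distrib_left sum_distrib_right mult.commute)
qed

lemma endpoint_packing_le_nu_w:
  fixes x :: "real set \<Rightarrow> real"
  assumes "endpoint_packing x"
  shows "(\<Sum>h\<in>H. w h * x h) \<le> 2 * d * nu_w H w"
proof (induction "card {h\<in>H. 0 < w h}" arbitrary: w rule: less_induct)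
  case less
  define S where "S = {h\<in>H. 0 < w h}"
  have "S \<subseteq> H"
    unfolding S_def by auto
  have x_nonneg: "0 \<le> x h" if "h \<in> H" for h
    using assms that unfolding endpoint_packing_def by auto
  show ?case
  proof (cases "(\<Sum>h\<in>S. x h) = 0")
    case True
    then have "\<forall>h\<in>S. x h = 0"
      using finite_H \<open>S \<subseteq> H\<close> x_nonneg by (subst (asm) sum_nonneg_eq_0_iff) (auto dest: finite_subset)
    then have "(\<Sum>h\<in>H. w h * x h) = 0"
      unfolding S_def by (intro sum.neutral) auto
    then show ?thesis by simp
  next
    case False
    moreover have "0 \<le> (\<Sum>h\<in>S. x h)"
      using x_nonneg \<open>S \<subseteq> H\<close> by (intro sum_nonneg) auto
    ultimately have "0 < (\<Sum>h\<in>S. x h)"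
      by simp
    then obtain h0 where h0: "h0 \<in> S" "0 < x h0" and light: "(\<Sum>e\<in>{e\<in>S. h0 \<inter> e \<noteq> {}}. x e) \<le> 2 * d"
      using exists_light_edge[OF assms \<open>S \<subseteq> H\<close>] by blast
    define w' where "w' = local_ratio_weight id w h0"
    have "h0 \<in> H" "0 < w h0" "h0 \<noteq> {}"
      using h0(1) right_ends_nonempty right_ends_subset unfolding S_def by blast+
    have "card {h\<in>H. 0 < w' h} < card {h\<in>H. 0 < w h}"
      unfolding w'_def using local_ratio_support_less[of H h0 w id] finite_H \<open>h0 \<in> H\<close> \<open>0 < w h0\<close> \<open>h0 \<noteq> {}\<close>
      by simp
    then have IH: "(\<Sum>h\<in>H. w' h * x h) \<le> 2 * d * nu_w H w'"
      by (rule less)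
    have "{e\<in>H. 0 < w e \<and> id h0 \<inter> id e \<noteq> {}} = {e\<in>S. h0 \<inter> e \<noteq> {}}"
      unfolding S_def by auto
    then have "(\<Sum>h\<in>H. w h * x h) \<le> (\<Sum>h\<in>H. w' h * x h) + w h0 * (\<Sum>e\<in>{e\<in>S. h0 \<inter> e \<noteq> {}}. x e)"
      using local_ratio_weighted_sum[OF finite_H, of x w id h0] x_nonneg unfolding w'_def by simp
    also have "\<dots> \<le> real (2 * d * nu_w H w') + real (w h0) * (2 * d)"
      using IH light by (intro add_mono mult_left_mono) auto
    also have "\<dots> = real (2 * d * (nu_w H w' + w h0))"
      by (simp add: algebra_simps)
    also have "\<dots> \<le> real (2 * d * nu_w H w)"
      using nu_w_local_ratio[of H h0 w] finite_H \<open>h0 \<in> H\<close> \<open>0 < w h0\<close> \<open>h0 \<noteq> {}\<close>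
      unfolding w'_def by (intro of_nat_mono mult_le_mono2) simp
    finally show ?thesis .
  qed
qed

lemma fractional_endpoint_cover:
  obtains g :: "real \<Rightarrow> real" where "\<forall>v\<in>endpoints. 0 \<le> g v"
    "\<forall>h\<in>H. w h \<le> (\<Sum>v\<in>endpoints \<inter> h. g v)" "(\<Sum>v\<in>endpoints. g v) \<le> 2 * d * nu_w H w"
proof -
  define A :: "real \<Rightarrow> real set \<Rightarrow> real" where "A v h = (if v \<in> h then 1 else 0)" for v h
  have A_sum: "(\<Sum>e\<in>H. A v e * x e) = (\<Sum>e\<in>{e\<in>H. v \<in> e}. x e)" for v and x :: "real set \<Rightarrow> real"
    unfolding A_def using finite_H by (auto simp: sum.inter_filter intro: sum.cong)
  have bound: "(\<Sum>h\<in>H. real (w h) * x h) \<le> real (2 * d * nu_w H w)"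
    if "\<forall>h\<in>H. 0 \<le> x h" "\<forall>v\<in>endpoints. (\<Sum>e\<in>H. A v e * x e) \<le> 1" for x
  proof -
    have "endpoint_packing x"
      using that unfolding endpoint_packing_def A_sum by blast
    then show ?thesis
      by (rule endpoint_packing_le_nu_w)
  qed
  obtain g :: "real \<Rightarrow> real" where "\<forall>v\<in>endpoints. 0 \<le> g v"
    "\<forall>h\<in>H. w h \<le> (\<Sum>v\<in>endpoints. g v * A v h)" "(\<Sum>v\<in>endpoints. g v) \<le> 2 * d * nu_w H w"
    using fractional_cover_of_bounded_packing[where A = A and c = "\<lambda>h. real (w h)", OF finite_endpoints finite_H bound]
    by blast
  moreover have "(\<Sum>v\<in>endpoints. g v * A v h) = (\<Sum>v\<in>endpoints \<inter> h. g v)" for h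
    unfolding A_def using finite_endpoints by (auto simp: sum.inter_restrict intro: sum.cong)
  ultimately show ?thesis
    using that[of g] by simp
qed

lemma heavy_component:
  fixes g :: "real \<Rightarrow> real"
  assumes "h \<in> H" "finite P" "0 \<le> c" "c \<le> (\<Sum>v\<in>P \<inter> h. g v)"
  shows "\<exists>i<K h. c \<le> d * (\<Sum>v\<in>P \<inter> {lo h i..hi h i}. g v)"
proof (rule ccontr)
  assume "\<not> ?thesis"
  then have light: "d * (\<Sum>v\<in>P \<inter> {lo h i..hi h i}. g v) < c" if "i < K h" for i
    using that by auto
  have "P \<inter> h = (\<Union>i<K h. P \<inter> {lo h i..hi h i})"
    using mem_edge_iff[OF assms(1)] by blast
  moreover have "\<forall>i\<in>{..<K h}. \<forall>j\<in>{..<K h}. i \<noteq> j \<longrightarrow>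
      (P \<inter> {lo h i..hi h i}) \<inter> (P \<inter> {lo h j..hi h j}) = {}"
    using components_disjoint[OF assms(1)] by blast
  ultimately have "(\<Sum>v\<in>P \<inter> h. g v) = (\<Sum>i<K h. \<Sum>v\<in>P \<inter> {lo h i..hi h i}. g v)"
    using assms(2) by (simp only:) (rule sum.UNION_disjoint, auto)
  then have "d * (\<Sum>v\<in>P \<inter> h. g v) = (\<Sum>i<K h. d * (\<Sum>v\<in>P \<inter> {lo h i..hi h i}. g v))"
    by (simp add: sum_distrib_left)
  also have "\<dots> < (\<Sum>i<K h. c)"
    using light K_pos[OF assms(1)] by (intro sum_strict_mono) (auto simp: lessThan_empty_iff)
  also have "\<dots> \<le> d * c"
    using K_le[OF assms(1)] assms(3) by (simp add: mult_right_mono)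
  finally show False
    using assms(4) K_pos[OF assms(1)] K_le[OF assms(1)] by (simp add: mult_less_cancel_left)
qed

lemma component_subset: "h \<in> H \<Longrightarrow> i < K h \<Longrightarrow> {lo h i..hi h i} \<subseteq> h"
  using mem_edge_iff by blast

theorem tau_w_le_two_d_squared_nu_w: "tau_w H w \<le> 2 * d^2 * nu_w H w"
proof -
  obtain g :: "real \<Rightarrow> real" where g_nonneg: "\<forall>v\<in>endpoints. 0 \<le> g v"
    and g_cover: "\<forall>h\<in>H. w h \<le> (\<Sum>v\<in>endpoints \<inter> h. g v)"
    and g_cost: "(\<Sum>v\<in>endpoints. g v) \<le> 2 * d * nu_w H w"
    by (rule fractional_endpoint_cover)
  have "\<forall>h\<in>H. \<exists>i<K h. w h \<le> d * (\<Sum>v\<in>endpoints \<inter> {lo h i..hi h i}. g v)"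
    using g_cover by (simp add: heavy_component finite_endpoints)
  then obtain i where i: "\<forall>h\<in>H. i h < K h \<and> w h \<le> d * (\<Sum>v\<in>endpoints \<inter> {lo h (i h)..hi h (i h)}. g v)"
    by (rule bchoice[THEN exE])
  define J where "J h = {lo h (i h)..hi h (i h)}" for h
  have "\<forall>h\<in>H. lo h (i h) \<le> hi h (i h)"
    using i lo_le_hi by blast
  from interval_cover_le_packing[OF finite_H this, of w]
  obtain G Q F where cover: "finite Q" "supp_g G \<subseteq> Q" "\<forall>h\<in>H. w h \<le> sum G (J h \<inter> Q)"
    and packing: "F \<subseteq> H" "disjoint_family_on J F" and cost: "sum G Q \<le> sum w F"
    unfolding J_def[symmetric] by blast
  have "w h \<le> sum G (h \<inter> Q)" if "h \<in> H" for h
  proof -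
    have "sum G (J h \<inter> Q) \<le> sum G (h \<inter> Q)"
      using cover(1) component_subset[OF that] i that unfolding J_def by (intro sum_mono2) auto
    then show ?thesis
      using cover(3) that by (meson order_trans)
  qed
  then have "tau_w H w \<le> sum w F"
    using tau_w_le[OF cover(1,2)] cost by (meson order_trans)
  moreover have "real (sum w F) \<le> d * (\<Sum>v\<in>endpoints. g v)"
    unfolding of_nat_sum using packing finite_H finite_endpoints g_nonneg i
    by (intro sum_le_of_disjoint_family) (auto simp: J_def dest: finite_subset)
  then have "real (sum w F) \<le> real (2 * d^2 * nu_w H w)"
    using mult_left_mono[OF g_cost, of "real d"] by (simp add: power2_eq_square)
  ultimately show ?thesis
    by linarith
qed

end

theorem corollary1p10:
  fixes d :: nat and H :: "real set set" and w :: "real set \<Rightarrow> nat"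
  assumes "d \<ge> 1" and "finite H" and "\<forall>h\<in>H. d_interval d h"
  shows "tau_w H w \<le> 2 * d^2 * nu_w H w"
proof -
  obtain K lo hi where "d_interval_family d H K lo hi"
    using d_interval_family_exists[OF assms(2,3)] .
  then show ?thesis
    by (rule d_interval_family.tau_w_le_two_d_squared_nu_w)
qed

end
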